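(* Let $A\le B$ be quasi-copulas on $[0,1]^2$. Then there exists a copula $C$ with $A\le C\le B$ if and only if $L^{(A,B)}(R)\ge0$ for all $R\in\mathfrak{R}$.
   Context: For $Q:[0,1]^2\to\mathbb{R}$, $V_Q([s_1,s_2]\times[t_1,t_2])=Q(s_1,t_1)+Q(s_2,t_2)-Q(s_2,t_1)-Q(s_1,t_2)$. A copula is grounded ($Q(x,0)=Q(0,y)=0$), has neutral element 1 ($Q(x,1)=x$, $Q(1,y)=y$) and $V_Q(R)\ge0$ for all rectangles in $[0,1]^2$; a quasi-copula is grounded, has neutral element $1$, and $V_Q(R)\ge0$ for rectangles having a side on the boundary of $[0,1]^2$. A rectangle is $[s_1,s_2]\times[t_1,t_2]\subseteq[0,1]^2$ with $s_1<s_2$, $t_1<t_2$; main corners: southwest and northeast; opposite corners: southeast and northwest. $\mathfrak{R}$: finite formal unions $R=R_1\sqcup\dots\sqcup R_n$ of rectangles (repetitions allowed), with multiplicity $m_R(\mathbf{y})=\sum_i m_{R_i}(\mathbf{y})$, where $m_{R_i}(\mathbf{y})$ is $1$ at main corners, $-1$ at opposite corners, $0$ elsewhere. $L^{(A,B)}(R)=\sum_{m_R(\mathbf{y})>0}B(\mathbf{y})m_R(\mathbf{y})+\sum_{m_R(\mathbf{y})<0}A(\mathbf{y})m_R(\mathbf{y})$. *)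

theory Defs
  imports Complex_Main
begin

type_synonym pt = "real \<times> real"

text \<open>A rectangle [s1,s2] x [t1,t2] is encoded as ((s1,s2),(t1,t2)).\<close>
type_synonym rect = "(real \<times> real) \<times> (real \<times> real)"

definition unit_sq :: "pt set" where
  "unit_sq = {0..1} \<times> {0..1}"

definition is_rect :: "rect \<Rightarrow> bool" where
  "is_rect r = (case r of ((s1,s2),(t1,t2)) \<Rightarrow>
      0 \<le> s1 \<and> s1 < s2 \<and> s2 \<le> 1 \<and> 0 \<le> t1 \<and> t1 < t2 \<and> t2 \<le> 1)"

definition Vol :: "(pt \<Rightarrow> real) \<Rightarrow> rect \<Rightarrow> real" where
  "Vol Q r = (case r of ((s1,s2),(t1,t2)) \<Rightarrow>
      Q (s1,t1) + Q (s2,t2) - Q (s2,t1) - Q (s1,t2))"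

definition grounded :: "(pt \<Rightarrow> real) \<Rightarrow> bool" where
  "grounded Q = (\<forall>x\<in>{0..1}. Q (x,0) = 0 \<and> Q (0,x) = 0)"

definition neutral_one :: "(pt \<Rightarrow> real) \<Rightarrow> bool" where
  "neutral_one Q = (\<forall>x\<in>{0..1}. Q (x,1) = x \<and> Q (1,x) = x)"

definition copula :: "(pt \<Rightarrow> real) \<Rightarrow> bool" where
  "copula Q = (grounded Q \<and> neutral_one Q \<and> (\<forall>r. is_rect r \<longrightarrow> Vol Q r \<ge> 0))"

definition side_on_boundary :: "rect \<Rightarrow> bool" where
  "side_on_boundary r = (case r of ((s1,s2),(t1,t2)) \<Rightarrow>
      s1 = 0 \<or> s2 = 1 \<or> t1 = 0 \<or> t2 = 1)"

definition quasi_copula :: "(pt \<Rightarrow> real) \<Rightarrow> bool" where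
  "quasi_copula Q = (grounded Q \<and> neutral_one Q \<and>
      (\<forall>r. is_rect r \<and> side_on_boundary r \<longrightarrow> Vol Q r \<ge> 0))"

definition rect_mult :: "rect \<Rightarrow> pt \<Rightarrow> int" where
  "rect_mult r y = (case r of ((s1,s2),(t1,t2)) \<Rightarrow>
      (if y = (s1,t1) \<or> y = (s2,t2) then 1
       else if y = (s2,t1) \<or> y = (s1,t2) then -1 else 0))"

definition rect_corners :: "rect \<Rightarrow> pt set" where
  "rect_corners r = (case r of ((s1,s2),(t1,t2)) \<Rightarrow> {(s1,t1),(s2,t2),(s2,t1),(s1,t2)})"

text \<open>Elements of the class of formal unions: finite lists of rectangles
  (repetitions allowed).\<close>
definition formal_union :: "rect list \<Rightarrow> bool" where
  "formal_union R = (\<forall>r\<in>set R. is_rect r)"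

definition mult :: "rect list \<Rightarrow> pt \<Rightarrow> int" where
  "mult R y = (\<Sum>r\<leftarrow>R. rect_mult r y)"

definition union_corners :: "rect list \<Rightarrow> pt set" where
  "union_corners R = (\<Union>r\<in>set R. rect_corners r)"

text \<open>Only corners of the constituent rectangles can have nonzero multiplicity.\<close>
definition L_AB :: "(pt \<Rightarrow> real) \<Rightarrow> (pt \<Rightarrow> real) \<Rightarrow> rect list \<Rightarrow> real" where
  "L_AB A B R =
     (\<Sum>y\<in>{y\<in>union_corners R. mult R y > 0}. B y * of_int (mult R y)) +
     (\<Sum>y\<in>{y\<in>union_corners R. mult R y < 0}. A y * of_int (mult R y))"

end

theory Submission imports Defs begin

text \<open>For necessity, the term of a point y in L^(A,B)(R) dominates C(y) m_R(y), and the sum of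
  the latter is the sum of the C-volumes of the constituent rectangles.
  Sufficiency is a Hahn-Banach type argument. Call a pair of bounds a \<le> b between A and B
  admissible if L^(a,b) is nonnegative on all formal unions. Any single point can be pinned
  down, i.e. an admissible pair can be shrunk to a(y) = b(y) = c while staying admissible:
  combining multiples of two formal unions with opposite multiplicities at y shows that the
  lower constraints on c imposed by the first kind lie below the upper constraints imposed
  by the second kind. By Zorn's lemma there is a maximal admissible pair; it has a = b, and
  then L^(a,a)([r]) = V_a(r) \<ge> 0 makes a a copula.\<close>

section \<open>Multiplicities\<close>

lemma finite_union_corners: "finite (union_corners R)"
  unfolding union_corners_def rect_corners_def by (auto split: prod.splits)

lemma rect_mult_eq_0: "y \<notin> rect_corners r \<Longrightarrow> rect_mult r y = 0"
  unfolding rect_corners_def rect_mult_def by (auto split: prod.splits)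

lemma mult_eq_0: "y \<notin> union_corners R \<Longrightarrow> mult R y = 0"
  unfolding mult_def union_corners_def by (induction R) (auto simp: rect_mult_eq_0)

lemma mult_Nil [simp]: "mult [] y = 0"
  by (simp add: mult_def)

lemma mult_Cons [simp]: "mult (r # R) y = rect_mult r y + mult R y"
  by (simp add: mult_def)

lemma mult_append [simp]: "mult (R @ S) y = mult R y + mult S y"
  by (simp add: mult_def)

lemma mult_concat_replicate [simp]: "mult (concat (replicate n R)) y = int n * mult R y"
  by (induction n) (auto simp: algebra_simps)

lemma union_corners_append: "union_corners (R @ S) = union_corners R \<union> union_corners S"
  unfolding union_corners_def by auto

lemma union_corners_concat_replicate: "union_corners (concat (replicate n R)) \<subseteq> union_corners R"
  unfolding union_corners_def by (induction n) auto

lemma formal_union_append: "formal_union (R @ S) \<longleftrightarrow> formal_union R \<and> formal_union S"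
  unfolding formal_union_def by auto

lemma formal_union_concat_replicate: "formal_union R \<Longrightarrow> formal_union (concat (replicate n R))"
  unfolding formal_union_def by (induction n) auto

lemma rect_corners_subset_unit_sq: "is_rect r \<Longrightarrow> rect_corners r \<subseteq> unit_sq"
  unfolding is_rect_def rect_corners_def unit_sq_def by (auto split: prod.splits)

lemma union_corners_subset_unit_sq: "formal_union R \<Longrightarrow> union_corners R \<subseteq> unit_sq"
  unfolding formal_union_def union_corners_def using rect_corners_subset_unit_sq by blast

lemma sum_rect_mult_eq_Vol:
  assumes "is_rect r" "finite S" "rect_corners r \<subseteq> S"
  shows "(\<Sum>z\<in>S. f z * of_int (rect_mult r z)) = Vol f r"
proof -
  have "(\<Sum>z\<in>S. f z * of_int (rect_mult r z)) = (\<Sum>z\<in>rect_corners r. f z * of_int (rect_mult r z))"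
    by (rule sum.mono_neutral_right[OF assms(2,3)]) (auto simp: rect_mult_eq_0)
  also have "\<dots> = Vol f r"
    using assms(1) unfolding is_rect_def rect_corners_def rect_mult_def Vol_def
    by (auto split: prod.splits)
  finally show ?thesis .
qed

lemma sum_mult_eq_sum_Vol:
  assumes "formal_union R" "finite S" "union_corners R \<subseteq> S"
  shows "(\<Sum>z\<in>S. f z * of_int (mult R z)) = (\<Sum>r\<leftarrow>R. Vol f r)"
  using assms
proof (induction R)
  case (Cons r R)
  then have r: "is_rect r" "rect_corners r \<subseteq> S" and R: "formal_union R" "union_corners R \<subseteq> S"
    by (auto simp: formal_union_def union_corners_def)
  have "(\<Sum>z\<in>S. f z * of_int (mult (r # R) z))
      = (\<Sum>z\<in>S. f z * of_int (rect_mult r z)) + (\<Sum>z\<in>S. f z * of_int (mult R z))"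
    by (simp add: algebra_simps sum.distrib)
  also have "\<dots> = Vol f r + (\<Sum>r\<leftarrow>R. Vol f r)"
    using sum_rect_mult_eq_Vol[OF r(1) \<open>finite S\<close> r(2)] Cons.IH[OF R(1) \<open>finite S\<close> R(2)] by simp
  finally show ?case by simp
qed simp

section \<open>The functional L\<close>

definition L_term :: "real \<Rightarrow> real \<Rightarrow> int \<Rightarrow> real" where
  "L_term \<alpha> \<beta> m = (if m > 0 then \<beta> * of_int m else if m < 0 then \<alpha> * of_int m else 0)"

definition L_nonneg :: "(pt \<Rightarrow> real) \<Rightarrow> (pt \<Rightarrow> real) \<Rightarrow> bool" where
  "L_nonneg a b \<longleftrightarrow> (\<forall>R. formal_union R \<longrightarrow> 0 \<le> L_AB a b R)"

lemma L_term_same [simp]: "L_term c c m = c * of_int m"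
  by (simp add: L_term_def)

lemma L_term_eq_max: "\<alpha> \<le> \<beta> \<Longrightarrow> L_term \<alpha> \<beta> m = max (\<alpha> * of_int m) (\<beta> * of_int m)"
  unfolding L_term_def by (auto simp: max_def mult_right_mono mult_right_mono_neg)

lemma L_term_lower_bound: "\<alpha> \<le> c \<Longrightarrow> c \<le> \<beta> \<Longrightarrow> c * of_int m \<le> L_term \<alpha> \<beta> m"
  unfolding L_term_def by (auto simp: mult_right_mono mult_right_mono_neg)

lemma L_term_add_le:
  assumes "\<alpha> \<le> \<beta>" "q \<ge> 0" "p \<ge> 0"
  shows "L_term \<alpha> \<beta> (q * m + p * n) \<le> of_int q * L_term \<alpha> \<beta> m + of_int p * L_term \<alpha> \<beta> n"
proof -
  define M where "M x = max (\<alpha> * x) (\<beta> * x)" for x :: real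
  have "\<gamma> * (of_int q * of_int m + of_int p * of_int n) \<le> of_int q * M (of_int m) + of_int p * M (of_int n)"
    if "\<gamma> = \<alpha> \<or> \<gamma> = \<beta>" for \<gamma>
  proof -
    have "of_int q * (\<gamma> * of_int m) \<le> of_int q * M (of_int m)"
      "of_int p * (\<gamma> * of_int n) \<le> of_int p * M (of_int n)"
      using that assms by (auto simp: M_def intro!: mult_left_mono)
    then show ?thesis
      by (simp add: algebra_simps)
  qed
  then show ?thesis
    using assms(1) by (simp add: L_term_eq_max M_def)
qed

lemma L_term_perturb:
  assumes "\<alpha> - e \<le> \<alpha>'" "\<beta>' \<le> \<beta> + e" "\<alpha>' \<le> \<beta>'" "\<alpha> \<le> \<beta>"
  shows "L_term \<alpha>' \<beta>' m \<le> L_term \<alpha> \<beta> m + e * \<bar>of_int m\<bar>"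
proof (cases m "0 :: int" rule: linorder_cases)
  case less
  then have "\<alpha>' * of_int m \<le> (\<alpha> - e) * of_int m" using assms by (intro mult_right_mono_neg) auto
  then show ?thesis using less by (simp add: L_term_def algebra_simps)
next
  case greater
  then have "\<beta>' * of_int m \<le> (\<beta> + e) * of_int m" using assms by (intro mult_right_mono) auto
  then show ?thesis using greater by (simp add: L_term_def algebra_simps)
qed (simp add: L_term_def)

lemma L_AB_eq_sum_L_term: "L_AB a b R = (\<Sum>z\<in>union_corners R. L_term (a z) (b z) (mult R z))"
  unfolding L_AB_def L_term_def
  by (auto simp: sum.inter_filter[OF finite_union_corners] sum.distrib[symmetric] intro!: sum.cong)

lemma L_AB_eq_sum_L_term_superset:
  assumes "finite S" "union_corners R \<subseteq> S"
  shows "L_AB a b R = (\<Sum>z\<in>S. L_term (a z) (b z) (mult R z))"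
  unfolding L_AB_eq_sum_L_term
  by (rule sum.mono_neutral_left[OF assms]) (auto simp: mult_eq_0 L_term_def)

lemma L_AB_eq_sum_Vol:
  assumes "formal_union R" "\<forall>y\<in>unit_sq. a y = b y"
  shows "L_AB a b R = (\<Sum>r\<leftarrow>R. Vol a r)"
proof -
  have "L_AB a b R = (\<Sum>z\<in>union_corners R. a z * of_int (mult R z))"
    unfolding L_AB_eq_sum_L_term
    using assms union_corners_subset_unit_sq[OF assms(1)] by (intro sum.cong) auto
  also have "\<dots> = (\<Sum>r\<leftarrow>R. Vol a r)"
    by (rule sum_mult_eq_sum_Vol[OF assms(1) finite_union_corners subset_refl])
  finally show ?thesis .
qed

lemma L_AB_perturb:
  assumes "\<forall>z\<in>union_corners R. a z - e \<le> a' z \<and> b' z \<le> b z + e \<and> a' z \<le> b' z \<and> a z \<le> b z"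
  shows "L_AB a' b' R \<le> L_AB a b R + e * (\<Sum>z\<in>union_corners R. \<bar>of_int (mult R z)\<bar>)"
proof -
  have "L_AB a' b' R \<le> (\<Sum>z\<in>union_corners R. L_term (a z) (b z) (mult R z) + e * \<bar>of_int (mult R z)\<bar>)"
    unfolding L_AB_eq_sum_L_term using assms by (intro sum_mono L_term_perturb) auto
  then show ?thesis
    by (simp add: L_AB_eq_sum_L_term sum.distrib sum_distrib_left)
qed

lemma L_AB_fun_upd:
  "L_AB (a(y:=c)) (b(y:=c)) R = L_AB a b R - L_term (a y) (b y) (mult R y) + c * of_int (mult R y)"
proof -
  define S where "S = insert y (union_corners R)"
  have S: "finite S" "union_corners R \<subseteq> S" "y \<in> S"
    unfolding S_def by (auto simp: finite_union_corners)
  have "L_AB (a(y:=c)) (b(y:=c)) R = c * of_int (mult R y) + (\<Sum>z\<in>S-{y}. L_term (a z) (b z) (mult R z))"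
    unfolding L_AB_eq_sum_L_term_superset[OF S(1,2)] sum.remove[OF S(1,3)] by (auto intro!: sum.cong)
  moreover have "L_AB a b R = L_term (a y) (b y) (mult R y) + (\<Sum>z\<in>S-{y}. L_term (a z) (b z) (mult R z))"
    unfolding L_AB_eq_sum_L_term_superset[OF S(1,2)] sum.remove[OF S(1,3)] by simp
  ultimately show ?thesis by simp
qed

lemma L_AB_nonneg_if_copula_between:
  assumes "copula C" "\<forall>y\<in>unit_sq. A y \<le> C y \<and> C y \<le> B y" "formal_union R"
  shows "0 \<le> L_AB A B R"
proof -
  have "0 \<le> (\<Sum>r\<leftarrow>R. Vol C r)"
    using assms(1,3) unfolding copula_def formal_union_def by (intro sum_list_nonneg) auto
  also have "\<dots> = (\<Sum>z\<in>union_corners R. C z * of_int (mult R z))"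
    by (rule sum_mult_eq_sum_Vol[OF assms(3) finite_union_corners subset_refl, symmetric])
  also have "\<dots> \<le> L_AB A B R"
    unfolding L_AB_eq_sum_L_term
    using assms(2) union_corners_subset_unit_sq[OF assms(3)] by (intro sum_mono L_term_lower_bound) auto
  finally show ?thesis .
qed

section \<open>Pinning down one point\<close>

lemma L_AB_opposite_mult:
  assumes ab: "\<forall>y\<in>unit_sq. a y \<le> b y" and L: "L_nonneg a b"
    and R1: "formal_union R1" "mult R1 y = p" "p > 0"
    and R2: "formal_union R2" "mult R2 y = - q" "q > 0"
  shows "of_int p * of_int q * (b y - a y) \<le> of_int q * L_AB a b R1 + of_int p * L_AB a b R2"
proof -
  text \<open>In q copies of R1 and p copies of R2 the multiplicities at y cancel.\<close>
  define R where "R = concat (replicate (nat q) R1) @ concat (replicate (nat p) R2)"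
  have "formal_union R"
    unfolding R_def formal_union_append using R1 R2 by (simp add: formal_union_concat_replicate)
  then have "0 \<le> L_AB a b R" using L unfolding L_nonneg_def by blast
  have mult_R: "mult R z = q * mult R1 z + p * mult R2 z" for z
    unfolding R_def using R1 R2 by simp
  define S where "S = union_corners R1 \<union> union_corners R2"
  have "y \<in> union_corners R1" using mult_eq_0[of y R1] R1 by fastforce
  then have S: "finite S" "y \<in> S" "S \<subseteq> unit_sq"
    unfolding S_def using R1 R2 union_corners_subset_unit_sq by (auto simp: finite_union_corners)
  have "union_corners R \<subseteq> S"
    unfolding R_def S_def union_corners_append using union_corners_concat_replicate by blast
  have split: "L_AB a b R' = L_term (a y) (b y) (mult R' y) + (\<Sum>z\<in>S-{y}. L_term (a z) (b z) (mult R' z))"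
    if "union_corners R' \<subseteq> S" for R'
    using L_AB_eq_sum_L_term_superset[OF S(1) that] sum.remove[OF S(1,2)] by simp
  have "0 \<le> (\<Sum>z\<in>S-{y}. L_term (a z) (b z) (mult R z))"
    using \<open>0 \<le> L_AB a b R\<close> split[OF \<open>union_corners R \<subseteq> S\<close>] mult_R R1 R2 by (simp add: L_term_def)
  also have "\<dots> \<le> (\<Sum>z\<in>S-{y}. of_int q * L_term (a z) (b z) (mult R1 z) + of_int p * L_term (a z) (b z) (mult R2 z))"
    unfolding mult_R using S(3) ab R1 R2 by (intro sum_mono L_term_add_le) auto
  also have "\<dots> = of_int q * (L_AB a b R1 - b y * of_int p) + of_int p * (L_AB a b R2 + a y * of_int q)"
    using split[of R1] split[of R2] R1 R2
    by (simp add: S_def sum.distrib sum_distrib_left L_term_def)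
  finally show ?thesis by (simp add: algebra_simps)
qed

text \<open>The value c is the largest of the lower constraints b(y) - L(R)/m_R(y) coming from
  unions with m_R(y) > 0; by the previous lemma it respects all upper constraints.\<close>

lemma one_point_extension:
  assumes ab: "\<forall>y\<in>unit_sq. a y \<le> b y" and L: "L_nonneg a b" and y: "y \<in> unit_sq"
  shows "\<exists>c. a y \<le> c \<and> c \<le> b y \<and> L_nonneg (a(y:=c)) (b(y:=c))"
proof -
  define lower where "lower = {b y - L_AB a b R / of_int (mult R y) | R. formal_union R \<and> mult R y > 0}"
  define c where "c = Sup (insert (a y) lower)"
  have lower_le: "x \<le> b y" if "x \<in> lower" for x
    using that L unfolding lower_def L_nonneg_def by auto
  have bdd: "bdd_above (insert (a y) lower)"
    using lower_le ab y by (auto intro!: bdd_aboveI[of _ "b y"])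
  have "a y \<le> c" unfolding c_def by (rule cSup_upper[OF _ bdd]) auto
  moreover have "c \<le> b y" unfolding c_def using lower_le ab y by (intro cSup_least) auto
  moreover have "0 \<le> L_AB (a(y:=c)) (b(y:=c)) R" if R: "formal_union R" for R
  proof (cases "mult R y" "0 :: int" rule: linorder_cases)
    case greater
    have "b y - L_AB a b R / of_int (mult R y) \<le> c"
      unfolding c_def by (rule cSup_upper[OF _ bdd]) (use R greater in \<open>auto simp: lower_def\<close>)
    then show ?thesis using greater by (simp add: L_AB_fun_upd L_term_def field_simps)
  next
    case less
    have "x \<le> a y + L_AB a b R / of_int (- mult R y)" if "x \<in> insert (a y) lower" for x
    proof -
      have "b y - L_AB a b R1 / of_int (mult R1 y) \<le> a y + L_AB a b R / of_int (- mult R y)"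
        if R1: "formal_union R1" "mult R1 y > 0" for R1
        using L_AB_opposite_mult[OF ab L R1(1) refl R1(2) R, where q = "- mult R y"] less R1
        by (simp add: field_simps)
      then show ?thesis
        using that L R less unfolding lower_def L_nonneg_def by (auto simp: divide_nonneg_neg)
    qed
    then have "c \<le> a y + L_AB a b R / of_int (- mult R y)"
      unfolding c_def by (intro cSup_least) auto
    then show ?thesis using less by (simp add: L_AB_fun_upd L_term_def field_simps)
  next
    case equal
    then show ?thesis using L R by (simp add: L_AB_fun_upd L_nonneg_def L_term_def)
  qed
  ultimately show ?thesis unfolding L_nonneg_def by blast
qed

section \<open>Maximal admissible bounds\<close>

lemma preorder_Zorn:
  fixes le :: "'a \<Rightarrow> 'a \<Rightarrow> bool"
  assumes refl: "\<And>x. x \<in> S \<Longrightarrow> le x x"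
    and trans: "\<And>x y z. x \<in> S \<Longrightarrow> y \<in> S \<Longrightarrow> z \<in> S \<Longrightarrow> le x y \<Longrightarrow> le y z \<Longrightarrow> le x z"
    and chain: "\<And>C. C \<subseteq> S \<Longrightarrow> C \<noteq> {} \<Longrightarrow> \<forall>x\<in>C. \<forall>y\<in>C. le x y \<or> le y x \<Longrightarrow> \<exists>u\<in>S. \<forall>x\<in>C. le x u"
    and "S \<noteq> {}"
  shows "\<exists>m\<in>S. \<forall>x\<in>S. le m x \<longrightarrow> le x m"
proof -
  text \<open>Zorn's lemma for set inclusion, applied to the down-sets of the preorder.\<close>
  define down where "down x = {y\<in>S. le y x}" for x
  have down_subset_iff: "down x \<subseteq> down y \<longleftrightarrow> le x y" if x: "x \<in> S" and y: "y \<in> S" for x y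
  proof
    assume "down x \<subseteq> down y"
    moreover have "x \<in> down x" using x refl[OF x] by (simp add: down_def)
    ultimately show "le x y" unfolding down_def by blast
  next
    assume "le x y"
    then show "down x \<subseteq> down y" using trans[OF _ x y] unfolding down_def by blast
  qed
  have "\<exists>U\<in>down ` S. \<forall>X\<in>Ch. X \<subseteq> U" if Ch: "Ch \<in> chains (down ` S)" for Ch
  proof (cases "Ch = {}")
    case True
    then show ?thesis using \<open>S \<noteq> {}\<close> by blast
  next
    case False
    define C where "C = {x\<in>S. down x \<in> Ch}"
    have Ch_eq: "Ch = down ` C"
      using chainsD2[OF Ch] unfolding C_def by blast
    have "C \<subseteq> S" by (simp add: C_def)
    moreover have "C \<noteq> {}" using False unfolding Ch_eq by simp
    moreover have "\<forall>x\<in>C. \<forall>y\<in>C. le x y \<or> le y x"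
    proof (intro ballI)
      fix x y assume "x \<in> C" "y \<in> C"
      then have "down x \<subseteq> down y \<or> down y \<subseteq> down x" "x \<in> S" "y \<in> S"
        using chainsD[OF Ch] unfolding C_def by blast+
      then show "le x y \<or> le y x" using down_subset_iff by metis
    qed
    ultimately have "\<exists>u\<in>S. \<forall>x\<in>C. le x u" by (rule chain)
    then obtain u where "u \<in> S" "\<forall>x\<in>C. le x u" ..
    then have "\<forall>X\<in>Ch. X \<subseteq> down u"
      using down_subset_iff \<open>C \<subseteq> S\<close> unfolding Ch_eq by blast
    then show ?thesis using \<open>u \<in> S\<close> by blast
  qed
  from Zorn_Lemma2[OF ballI[OF this]] obtain M
    where M: "M \<in> down ` S" "\<forall>X\<in>down ` S. M \<subseteq> X \<longrightarrow> X = M" ..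
  then obtain m where m: "m \<in> S" "M = down m" by (elim imageE)
  have "le x m" if x: "x \<in> S" "le m x" for x
  proof -
    have "down m \<subseteq> down x" using down_subset_iff[OF m(1) x(1)] x(2) by simp
    then have "down x = down m" using M(2) m(2) x(1) by simp
    then show "le x m" using down_subset_iff[OF x(1) m(1)] by simp
  qed
  then show ?thesis using m(1) by blast
qed

definition admissible :: "(pt \<Rightarrow> real) \<Rightarrow> (pt \<Rightarrow> real) \<Rightarrow> (pt \<Rightarrow> real) \<Rightarrow> (pt \<Rightarrow> real) \<Rightarrow> bool" where
  "admissible A B a b \<longleftrightarrow> (\<forall>y\<in>unit_sq. A y \<le> a y \<and> a y \<le> b y \<and> b y \<le> B y) \<and> L_nonneg a b"

definition tighter :: "(pt \<Rightarrow> real) \<times> (pt \<Rightarrow> real) \<Rightarrow> (pt \<Rightarrow> real) \<times> (pt \<Rightarrow> real) \<Rightarrow> bool" where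
  "tighter p q \<longleftrightarrow> (\<forall>y\<in>unit_sq. fst p y \<le> fst q y \<and> snd q y \<le> snd p y)"

context
  fixes A B :: "pt \<Rightarrow> real" and P :: "((pt \<Rightarrow> real) \<times> (pt \<Rightarrow> real)) set"
  assumes admissible_P: "\<And>p. p \<in> P \<Longrightarrow> admissible A B (fst p) (snd p)"
    and P_nonempty: "P \<noteq> {}"
    and P_chain: "\<And>p q. p \<in> P \<Longrightarrow> q \<in> P \<Longrightarrow> tighter p q \<or> tighter q p"
begin

definition chain_lower :: "pt \<Rightarrow> real" where
  "chain_lower y = (SUP p\<in>P. fst p y)"

definition chain_upper :: "pt \<Rightarrow> real" where
  "chain_upper y = (INF p\<in>P. snd p y)"

lemma bdd_above_chain_lower: "y \<in> unit_sq \<Longrightarrow> bdd_above ((\<lambda>p. fst p y) ` P)"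
  using admissible_P unfolding admissible_def by (intro bdd_aboveI[of _ "B y"]) force

lemma bdd_below_chain_upper: "y \<in> unit_sq \<Longrightarrow> bdd_below ((\<lambda>p. snd p y) ` P)"
  using admissible_P unfolding admissible_def by (intro bdd_belowI[of _ "A y"]) force

lemma chain_lower_ge: "p \<in> P \<Longrightarrow> y \<in> unit_sq \<Longrightarrow> fst p y \<le> chain_lower y"
  unfolding chain_lower_def using bdd_above_chain_lower by (intro cSup_upper) auto

lemma chain_upper_le: "p \<in> P \<Longrightarrow> y \<in> unit_sq \<Longrightarrow> chain_upper y \<le> snd p y"
  unfolding chain_upper_def using bdd_below_chain_upper by (intro cInf_lower) auto

lemma chain_lower_le_snd:
  assumes "q \<in> P" "y \<in> unit_sq"
  shows "chain_lower y \<le> snd q y"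
proof -
  have "fst p y \<le> snd q y" if "p \<in> P" for p
    using P_chain[OF that assms(1)] admissible_P[OF that] admissible_P[OF assms(1)] assms(2)
    unfolding tighter_def admissible_def by force
  then show ?thesis
    unfolding chain_lower_def using P_nonempty by (intro cSup_least) auto
qed

lemma chain_lower_le_upper:
  assumes "y \<in> unit_sq"
  shows "chain_lower y \<le> chain_upper y"
  unfolding chain_upper_def using P_nonempty chain_lower_le_snd[OF _ assms] by (intro cInf_greatest) auto

lemma tighter_chain_limit: "p \<in> P \<Longrightarrow> tighter p (chain_lower, chain_upper)"
  unfolding tighter_def using chain_lower_ge chain_upper_le by simp

lemma chain_approx:
  assumes "finite S" "S \<subseteq> unit_sq" "e > 0"
  shows "\<exists>p\<in>P. \<forall>z\<in>S. chain_lower z - e \<le> fst p z \<and> snd p z \<le> chain_upper z + e"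
  using assms
proof (induction S rule: finite_induct)
  case empty
  then show ?case using P_nonempty by blast
next
  case (insert z S)
  then have z: "z \<in> unit_sq" by simp
  obtain p1 where p1: "p1 \<in> P" "\<forall>y\<in>S. chain_lower y - e \<le> fst p1 y \<and> snd p1 y \<le> chain_upper y + e"
    using insert by auto
  obtain p2 where p2: "p2 \<in> P" "chain_lower z - e < fst p2 z"
    using less_cSup_iff[OF _ bdd_above_chain_lower[OF z], of "chain_lower z - e"] P_nonempty \<open>e > 0\<close>
    unfolding chain_lower_def by auto
  obtain p3 where p3: "p3 \<in> P" "snd p3 z < chain_upper z + e"
    using cInf_less_iff[OF _ bdd_below_chain_upper[OF z], of "chain_upper z + e"] P_nonempty \<open>e > 0\<close>
    unfolding chain_upper_def by auto
  text \<open>The tightest of p1, p2, p3 works, since P is a chain.\<close>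
  have "\<exists>p\<in>{p1, p2, p3}. \<forall>q\<in>{p1, p2, p3}. tighter q p"
    using P_chain p1(1) p2(1) p3(1) unfolding tighter_def by (smt (verit) insert_iff singletonD)
  then obtain p where "p \<in> P" "tighter p1 p" "tighter p2 p" "tighter p3 p"
    using p1(1) p2(1) p3(1) by blast
  then have "\<forall>y\<in>insert z S. chain_lower y - e \<le> fst p y \<and> snd p y \<le> chain_upper y + e"
    using p1(2) p2(2) p3(2) insert.prems(1) unfolding tighter_def by fastforce
  then show ?case using \<open>p \<in> P\<close> by blast
qed

lemma L_nonneg_chain_limit: "L_nonneg chain_lower chain_upper"
  unfolding L_nonneg_def
proof (intro allI impI)
  fix R assume R: "formal_union R"
  define K where "K = (\<Sum>z\<in>union_corners R. \<bar>real_of_int (mult R z)\<bar>)"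
  have "K \<ge> 0" unfolding K_def by (simp add: sum_nonneg)
  show "0 \<le> L_AB chain_lower chain_upper R"
  proof (rule field_le_epsilon)
    fix e :: real assume "0 < e"
    define \<epsilon> where "\<epsilon> = e / (K + 1)"
    have "\<epsilon> > 0" "\<epsilon> * K \<le> e"
      unfolding \<epsilon>_def using \<open>0 < e\<close> \<open>K \<ge> 0\<close> by (simp_all add: field_simps)
    obtain p where p: "p \<in> P"
      "\<forall>z\<in>union_corners R. chain_lower z - \<epsilon> \<le> fst p z \<and> snd p z \<le> chain_upper z + \<epsilon>"
      using chain_approx[OF finite_union_corners union_corners_subset_unit_sq[OF R] \<open>\<epsilon> > 0\<close>] by blast
    have "0 \<le> L_AB (fst p) (snd p) R"
      using admissible_P[OF p(1)] R unfolding admissible_def L_nonneg_def by blast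
    also have "\<dots> \<le> L_AB chain_lower chain_upper R + \<epsilon> * K"
      unfolding K_def using p admissible_P[OF p(1)] chain_lower_le_upper union_corners_subset_unit_sq[OF R]
      by (intro L_AB_perturb) (auto simp: admissible_def)
    finally show "0 \<le> L_AB chain_lower chain_upper R + e" using \<open>\<epsilon> * K \<le> e\<close> by linarith
  qed
qed

lemma admissible_chain_limit: "admissible A B chain_lower chain_upper"
proof -
  obtain p where p: "p \<in> P" using P_nonempty by blast
  have "A y \<le> chain_lower y \<and> chain_upper y \<le> B y" if "y \<in> unit_sq" for y
    using admissible_P[OF p] chain_lower_ge[OF p that] chain_upper_le[OF p that] that
    unfolding admissible_def by fastforce
  then show ?thesis
    unfolding admissible_def using chain_lower_le_upper L_nonneg_chain_limit by blast
qed

end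

lemma admissible_maximal_exists:
  assumes "admissible A B A B"
  shows "\<exists>a b. admissible A B a b \<and>
    (\<forall>a' b'. admissible A B a' b' \<longrightarrow> tighter (a, b) (a', b') \<longrightarrow> tighter (a', b') (a, b))"
proof -
  define S where "S = {(a, b). admissible A B a b}"
  have "\<exists>m\<in>S. \<forall>p\<in>S. tighter m p \<longrightarrow> tighter p m"
  proof (rule preorder_Zorn)
    show "tighter p p" for p
      by (simp add: tighter_def)
    show "tighter p r" if "tighter p q" "tighter q r" for p q r
      using that unfolding tighter_def by (meson order_trans)
    show "\<exists>u\<in>S. \<forall>p\<in>C. tighter p u"
      if C: "C \<subseteq> S" "C \<noteq> {}" "\<forall>p\<in>C. \<forall>q\<in>C. tighter p q \<or> tighter q p" for C
    proof
      have admissible_C: "\<And>p. p \<in> C \<Longrightarrow> admissible A B (fst p) (snd p)"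
        using C(1) by (auto simp: S_def)
      have chain_C: "\<And>p q. p \<in> C \<Longrightarrow> q \<in> C \<Longrightarrow> tighter p q \<or> tighter q p"
        using C(3) by blast
      show "(chain_lower C, chain_upper C) \<in> S"
        using admissible_chain_limit[OF admissible_C C(2) chain_C] by (simp add: S_def)
      show "\<forall>p\<in>C. tighter p (chain_lower C, chain_upper C)"
        using tighter_chain_limit[OF admissible_C C(2) chain_C] by blast
    qed
    show "S \<noteq> {}"
      using assms by (auto simp: S_def)
  qed
  then show ?thesis by (auto simp: S_def)
qed

lemma admissible_maximal_eq:
  assumes "admissible A B a b"
    and max: "\<forall>a' b'. admissible A B a' b' \<longrightarrow> tighter (a, b) (a', b') \<longrightarrow> tighter (a', b') (a, b)"
    and y: "y \<in> unit_sq"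
  shows "a y = b y"
proof -
  obtain c where c: "a y \<le> c" "c \<le> b y" "L_nonneg (a(y:=c)) (b(y:=c))"
    using one_point_extension[of a b y] assms(1) y unfolding admissible_def by blast
  have "A z \<le> (a(y:=c)) z \<and> (a(y:=c)) z \<le> (b(y:=c)) z \<and> (b(y:=c)) z \<le> B z" if "z \<in> unit_sq" for z
    using assms(1) c that unfolding admissible_def by (cases "z = y") (auto intro: order_trans)
  then have "admissible A B (a(y:=c)) (b(y:=c))"
    using c(3) unfolding admissible_def by blast
  moreover have "tighter (a, b) (a(y:=c), b(y:=c))"
    using c unfolding tighter_def by auto
  ultimately have "tighter (a(y:=c), b(y:=c)) (a, b)"
    using max by blast
  then show ?thesis using y c unfolding tighter_def by fastforce
qed

lemma copula_if_between_quasi_copulas: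
  assumes "quasi_copula A" "quasi_copula B" "\<forall>y\<in>unit_sq. A y \<le> C y \<and> C y \<le> B y"
    and "\<forall>r. is_rect r \<longrightarrow> 0 \<le> Vol C r"
  shows "copula C"
proof -
  have squeeze: "C y = v" if "y \<in> unit_sq" "A y = v" "B y = v" for y v
    using assms(3) that by force
  have "C (x, 0) = 0 \<and> C (0, x) = 0 \<and> C (x, 1) = x \<and> C (1, x) = x" if x: "x \<in> {0..1}" for x
    using assms(1,2) x unfolding quasi_copula_def grounded_def neutral_one_def
    by (intro conjI squeeze) (auto simp: unit_sq_def)
  then show ?thesis
    using assms(4) unfolding copula_def grounded_def neutral_one_def by blast
qed

theorem mainTheorem15:
  fixes A B :: "real \<times> real \<Rightarrow> real"
  assumes "quasi_copula A" and "quasi_copula B"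
    and "\<forall>y\<in>unit_sq. A y \<le> B y"
  shows "(\<exists>C. copula C \<and> (\<forall>y\<in>unit_sq. A y \<le> C y \<and> C y \<le> B y))
         \<longleftrightarrow> (\<forall>R. formal_union R \<longrightarrow> L_AB A B R \<ge> 0)"
proof
  assume "\<exists>C. copula C \<and> (\<forall>y\<in>unit_sq. A y \<le> C y \<and> C y \<le> B y)"
  then show "\<forall>R. formal_union R \<longrightarrow> L_AB A B R \<ge> 0"
    using L_AB_nonneg_if_copula_between by blast
next
  assume "\<forall>R. formal_union R \<longrightarrow> L_AB A B R \<ge> 0"
  then have "admissible A B A B"
    using assms(3) unfolding admissible_def L_nonneg_def by auto
  then obtain a b where ab: "admissible A B a b"
    "\<forall>a' b'. admissible A B a' b' \<longrightarrow> tighter (a, b) (a', b') \<longrightarrow> tighter (a', b') (a, b)"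
    using admissible_maximal_exists by blast
  then have eq: "\<forall>y\<in>unit_sq. a y = b y"
    using admissible_maximal_eq by blast
  have "0 \<le> Vol a r" if "is_rect r" for r
  proof -
    have r: "formal_union [r]" using that by (simp add: formal_union_def)
    then have "0 \<le> L_AB a b [r]" using ab(1) unfolding admissible_def L_nonneg_def by blast
    then show ?thesis using L_AB_eq_sum_Vol[OF r eq] by simp
  qed
  moreover have "\<forall>y\<in>unit_sq. A y \<le> a y \<and> a y \<le> B y"
    using ab(1) unfolding admissible_def by (meson order_trans)
  ultimately show "\<exists>C. copula C \<and> (\<forall>y\<in>unit_sq. A y \<le> C y \<and> C y \<le> B y)"
    using copula_if_between_quasi_copulas assms(1,2) by blast
qed

end
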